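(* Let $D$ be a delta-matroid on $[n,\overline{n}]$. The collection of independent sets $I$ of $D$ with $a(I)=0$ is a simplicial complex on $[n,\overline{n}]$, i.e., it is closed under taking subsets.
   Context: For a finite $E\subseteq\{1,2,\dots\}$ let $E\cup\overline{E}$ consist of $E$ and formal copies $\overline{i}$ ($i\in E$), with involution $a\mapsto\overline{a}$; $\overline{S}=\{\overline{a}:a\in S\}$; $[n,\overline{n}]$ is the case $E=[n]$. A subset is admissible if it contains at most one of $i,\overline{i}$ for each $i$. In $\mathbb{R}^E$ set $e_{\overline{i}}=-e_i$, $e_S=\sum_{a\in S}e_a$. A delta-matroid on $E\cup\overline{E}$ is a nonempty collection $\mathcal{F}$ of admissible sets of size $|E|$ (feasible sets) such that $\operatorname{Conv}\{e_B:B\in\mathcal{F}\}$ has all edges parallel to some $e_i$ or $e_i\pm e_j$. An admissible $S$ is independent in $D$ if it is contained in a feasible set. For $A\subseteq[n]$, the projection $D(A)$ is the delta-matroid on $([n]\setminus A)\cup\overline{([n]\setminus A)}$ with feasible sets $B\setminus(A\cup\overline{A})$, $B\in\mathcal{F}$. For admissible $S$, $\underline{S}\subseteq[n]$ is its unsigned version (image under identifying $i$ with $\overline{i}$). Order $[n]$ by $1<2<\dots<n$. For a delta-matroid $D'$ on $E\cup\overline{E}$ and a feasible set $B$ of $D'$: $i\in E$ is $B$-orientable if $B\,\Delta\,\{i,\overline{i}\}$ is not feasible in $D'$; $i$ is $B$-active if it is $B$-orientable and there is no $j\in E$ with $j<i$ such that $B\,\Delta\,\{i,j,\overline{i},\overline{j}\}$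 is feasible in $D'$. For $I$ independent in $D$, $I$ is a feasible set of $D([n]\setminus\underline{I})$, and $i\in\underline{I}$ is $I$-active if it is $I$-active in $D([n]\setminus\underline{I})$; $a(I)$ is the number of $I$-active elements of $\underline{I}$. *)

theory Defs
  imports "HOL-Analysis.Analysis" "HOL-Library.Function_Algebras"
begin

text \<open>We model R^E (E a finite set of positive integers) inside the real vector
space of all functions int => real, with pointwise operations.\<close>

instantiation "fun" :: (type, real_vector) real_vector
begin
definition scaleR_fun :: "real \<Rightarrow> ('a \<Rightarrow> 'b) \<Rightarrow> 'a \<Rightarrow> 'b"
  where "scaleR_fun c f = (\<lambda>x. c *\<^sub>R f x)"
instance
  by standard (auto simp: scaleR_fun_def fun_eq_iff scaleR_add_right scaleR_add_left)
end

text \<open>An element i of [n] is the integer i>0, its formal copy (bar i) is the integer -i.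
The involution a |-> bar a is negation.\<close>

definition signed_ground :: "nat \<Rightarrow> int set" where
  "signed_ground n = {i. 1 \<le> i \<and> i \<le> int n} \<union> {i. - int n \<le> i \<and> i \<le> -1}"

definition admissible :: "int set \<Rightarrow> bool" where
  "admissible S \<longleftrightarrow> (\<forall>a. \<not> (a \<in> S \<and> - a \<in> S))"

definition unsigned :: "int set \<Rightarrow> int set" where
  "unsigned S = abs ` S"

definition unitv :: "int \<Rightarrow> (int \<Rightarrow> real)" where
  "unitv i = (\<lambda>k. if k = i then 1 else 0)"

definition esigned :: "int \<Rightarrow> (int \<Rightarrow> real)" where
  "esigned a = (if a > 0 then unitv a else - unitv (- a))"

definition evec :: "int set \<Rightarrow> (int \<Rightarrow> real)" where
  "evec S = (\<Sum>a\<in>S. esigned a)"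

definition is_edge :: "(int \<Rightarrow> real) set \<Rightarrow> (int \<Rightarrow> real) \<Rightarrow> (int \<Rightarrow> real) \<Rightarrow> bool" where
  "is_edge P x y \<longleftrightarrow> x \<noteq> y \<and> closed_segment x y face_of P"

definition parallel :: "(int \<Rightarrow> real) \<Rightarrow> (int \<Rightarrow> real) \<Rightarrow> bool" where
  "parallel v w \<longleftrightarrow> (\<exists>c. c \<noteq> 0 \<and> v = c *\<^sub>R w)"

definition delta_matroid :: "nat \<Rightarrow> int set set \<Rightarrow> bool" where
  "delta_matroid n F \<longleftrightarrow>
     F \<noteq> {} \<and>
     (\<forall>B\<in>F. B \<subseteq> signed_ground n \<and> admissible B \<and> card B = n) \<and>
     (\<forall>x y. is_edge (convex hull (evec ` F)) x y \<longrightarrow>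
        (\<exists>i\<in>{1..int n}. parallel (x - y) (unitv i)) \<or>
        (\<exists>i\<in>{1..int n}. \<exists>j\<in>{1..int n}. i \<noteq> j \<and>
            (parallel (x - y) (unitv i + unitv j) \<or> parallel (x - y) (unitv i - unitv j))))"

definition independent :: "nat \<Rightarrow> int set set \<Rightarrow> int set \<Rightarrow> bool" where
  "independent n F S \<longleftrightarrow> S \<subseteq> signed_ground n \<and> admissible S \<and> (\<exists>B\<in>F. S \<subseteq> B)"

text \<open>Feasible sets of the projection D(A) where A = [n] - E', i.e. the delta-matroid
on E' \<union> bar E' with feasible sets B \<inter> (E' \<union> bar E').\<close>
definition restrict_feasible :: "int set set \<Rightarrow> int set \<Rightarrow> int set set" where
  "restrict_feasible F E' = (\<lambda>B. B \<inter> (E' \<union> uminus ` E')) ` F"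

definition symdiff :: "int set \<Rightarrow> int set \<Rightarrow> int set" where
  "symdiff A B = (A - B) \<union> (B - A)"

definition orientable :: "int set set \<Rightarrow> int set \<Rightarrow> int \<Rightarrow> bool" where
  "orientable F' B i \<longleftrightarrow> symdiff B {i, - i} \<notin> F'"

definition active :: "int set \<Rightarrow> int set set \<Rightarrow> int set \<Rightarrow> int \<Rightarrow> bool" where
  "active E F' B i \<longleftrightarrow> orientable F' B i \<and>
     \<not> (\<exists>j\<in>E. j < i \<and> symdiff B {i, j, - i, - j} \<in> F')"

definition I_active :: "int set set \<Rightarrow> int set \<Rightarrow> int \<Rightarrow> bool" where
  "I_active F I i \<longleftrightarrow> i \<in> unsigned I \<and>
     active (unsigned I) (restrict_feasible F (unsigned I)) I i"

definition activity :: "int set set \<Rightarrow> int set \<Rightarrow> nat" where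
  "activity F I = card {i \<in> unsigned I. I_active F I i}"

end

theory Submission
  imports Defs
begin

text \<open>If \<open>i\<close> is not \<open>I\<close>-active, some feasible set of \<open>D([n] - unsigned I)\<close> witnesses it:
either \<open>I \<Delta> {i, -i}\<close> or \<open>I \<Delta> {i, j, -i, -j}\<close> with \<open>j < i\<close>. For \<open>J \<subseteq> I\<close>, projecting that
witness further onto the signed support of \<open>J\<close> yields \<open>J \<Delta> {i, -i}\<close> or \<open>J \<Delta> {i, j, -i, -j}\<close>
(according to whether \<open>j\<close> survives), a feasible set of \<open>D([n] - unsigned J)\<close>, so \<open>i\<close> is not
\<open>J\<close>-active either.\<close>

lemma admissible_subset: "admissible I \<Longrightarrow> J \<subseteq> I \<Longrightarrow> admissible J"
  unfolding admissible_def by blast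

lemma independent_subset:
  "independent n F I \<Longrightarrow> J \<subseteq> I \<Longrightarrow> independent n F J"
  unfolding independent_def using admissible_subset by blast

lemma independent_finite: "independent n F I \<Longrightarrow> finite I"
  unfolding independent_def signed_ground_def by (auto intro: finite_subset)

lemma unsigned_mono: "J \<subseteq> I \<Longrightarrow> unsigned J \<subseteq> unsigned I"
  unfolding unsigned_def by auto

lemma unsigned_nonneg: "j \<in> unsigned I \<Longrightarrow> 0 \<le> j"
  unfolding unsigned_def by auto

lemma admissible_Int_signed_unsigned:
  assumes "admissible I" "J \<subseteq> I"
  shows "I \<inter> (unsigned J \<union> uminus ` unsigned J) = J"
proof
  show "J \<subseteq> I \<inter> (unsigned J \<union> uminus ` unsigned J)"
  proof
    fix b assume "b \<in> J"
    moreover have "b = \<bar>b\<bar> \<or> b = - \<bar>b\<bar>" by (simp add: abs_if)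
    ultimately show "b \<in> I \<inter> (unsigned J \<union> uminus ` unsigned J)"
      using assms(2) unfolding unsigned_def by (metis IntI UnI1 UnI2 image_eqI subsetD)
  qed
next
  show "I \<inter> (unsigned J \<union> uminus ` unsigned J) \<subseteq> J"
  proof
    fix x assume x: "x \<in> I \<inter> (unsigned J \<union> uminus ` unsigned J)"
    then obtain b where b: "b \<in> J" "x = b \<or> x = - b"
      unfolding unsigned_def by (auto simp: abs_if)
    with x assms show "x \<in> J" unfolding admissible_def by auto
  qed
qed

lemma symdiff_Int_distrib: "symdiff A B \<inter> W = symdiff (A \<inter> W) (B \<inter> W)"
  unfolding symdiff_def by auto

lemma restrict_feasible_mono:
  assumes "X \<in> restrict_feasible F U" "V \<subseteq> U"
  shows "X \<inter> (V \<union> uminus ` V) \<in> restrict_feasible F V"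
proof -
  obtain B where "B \<in> F" "X = B \<inter> (U \<union> uminus ` U)"
    using assms(1) unfolding restrict_feasible_def by auto
  moreover have "X \<inter> (V \<union> uminus ` V) = B \<inter> (V \<union> uminus ` V)"
    using calculation(2) assms(2) by auto
  ultimately show ?thesis unfolding restrict_feasible_def by auto
qed

lemma restrict_feasible_symdiff_subset:
  assumes "admissible I" "J \<subseteq> I"
    and "symdiff I Y \<in> restrict_feasible F (unsigned I)"
  shows "symdiff J (Y \<inter> (unsigned J \<union> uminus ` unsigned J)) \<in> restrict_feasible F (unsigned J)"
  using restrict_feasible_mono[OF assms(3) unsigned_mono[OF assms(2)]]
  unfolding symdiff_Int_distrib admissible_Int_signed_unsigned[OF assms(1,2)] .

lemma not_I_active_subset:
  assumes adm: "admissible I" and JI: "J \<subseteq> I" and iJ: "i \<in> unsigned J"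
    and not_active: "\<not> I_active F I i"
  shows "\<not> I_active F J i"
proof -
  let ?W = "unsigned J \<union> uminus ` unsigned J"
  have "i \<in> unsigned I" using iJ unsigned_mono[OF JI] by auto
  with not_active consider
      "symdiff I {i, - i} \<in> restrict_feasible F (unsigned I)"
    | j where "j \<in> unsigned I" "j < i"
        "symdiff I {i, j, - i, - j} \<in> restrict_feasible F (unsigned I)"
    unfolding I_active_def active_def orientable_def by auto
  then show ?thesis
  proof cases
    case 1
    have "{i, - i} \<inter> ?W = {i, - i}" using iJ by auto
    with restrict_feasible_symdiff_subset[OF adm JI 1] show ?thesis
      unfolding I_active_def active_def orientable_def by auto
  next
    case (2 j)
    note witness = restrict_feasible_symdiff_subset[OF adm JI 2(3)]
    show ?thesis
    proof (cases "j \<in> unsigned J")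
      case True
      then have "{i, j, - i, - j} \<inter> ?W = {i, j, - i, - j}" using iJ by auto
      with witness True \<open>j < i\<close> show ?thesis
        unfolding I_active_def active_def by auto
    next
      case False
      have "- j \<notin> ?W"
        using False unsigned_nonneg[OF 2(1)] unsigned_nonneg[of "- j" J] by force
      with False iJ have "{i, j, - i, - j} \<inter> ?W = {i, - i}" by auto
      with witness show ?thesis
        unfolding I_active_def active_def orientable_def by auto
    qed
  qed
qed

lemma activity_eq_0_iff:
  assumes "finite I"
  shows "activity F I = 0 \<longleftrightarrow> (\<forall>i. \<not> I_active F I i)"
proof -
  have "finite (unsigned I)" using assms unfolding unsigned_def by simp
  then show ?thesis unfolding activity_def I_active_def by auto
qed

theorem proposition3p9:
  fixes n :: nat and F :: "int set set"
  assumes "delta_matroid n F"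
  shows "\<forall>I J. independent n F I \<and> activity F I = 0 \<and> J \<subseteq> I
           \<longrightarrow> independent n F J \<and> activity F J = 0"
proof (intro allI impI conjI; elim conjE)
  fix I J
  assume indep: "independent n F I" and inactive: "activity F I = 0" and JI: "J \<subseteq> I"
  show "independent n F J" using independent_subset[OF indep JI] .
  have adm: "admissible I" using indep unfolding independent_def by simp
  have "\<not> I_active F J i" for i
    using not_I_active_subset[OF adm JI] inactive activity_eq_0_iff[OF independent_finite[OF indep]]
    unfolding I_active_def by blast
  then show "activity F J = 0"
    using activity_eq_0_iff[OF independent_finite[OF independent_subset[OF indep JI]]] by blast
qed

end
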